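(* Let $\mathsf{Op}$ be an operational theory and $\widetilde{\mathsf{Op}}$ the GPT obtained from $\mathsf{Op}$ by quotienting. The following are equivalent: (i) there exists a noncontextual ontological model $\xi_{\mathrm{nc}}:\mathsf{Op}\to\mathbf{SubStoch}$ of $\mathsf{Op}$; (ii) there exists an ontological model $\widetilde\xi:\widetilde{\mathsf{Op}}\to\mathbf{SubStoch}$ of $\widetilde{\mathsf{Op}}$; (iii) there exists a positive quasiprobabilistic model $\hat\xi^+:\widetilde{\mathsf{Op}}\to\mathbf{QuasiSubStoch}$ of $\widetilde{\mathsf{Op}}$.
   Context: A process theory consists of systems (closed under a composition $A\otimes B$, with a trivial system $I$) and processes $T:A\to B$, closed under sequential composition $\circ$ and parallel composition $\otimes$ and containing identities; processes $I\to A$ are states, $A\to I$ effects, $I\to I$ closed diagrams. An operational theory is a process theory $\mathsf{Op}$ (of laboratory procedures) with a probability rule $p$ assigning to each closed diagram $D$ a number $p(D)\in[0,1]$, with $p(D_1\otimes D_2)=p(D_1)p(D_2)$. A tester for type $A\to B$ is a triple $\tau=(s,e,W)$: a system $W$, a process $s:I\to A\otimes W$ and $e:B\otimes W\to I$; $\tau[T]:=e\circ(T\otimes\mathrm{id}_W)\circ s$. Processes $T,T':A\to B$ are operationally equivalent, $T\simeq T'$, iff $p(\tau[T])=p(\tau[T'])$ for all testers. Standing assumptions: mixtures of any two processes of the same type with any weights $\omega,1-\omega$ exist as processes $T_1$ with $p(\tau[T_1])=\omega p(\tau[T_2])+(1-\omega)p(\tau[T_3])$ for all $\tau$; coarse-grainings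 of effects add probabilities; all deterministic effects on a system are operationally equivalent; finitely many testers suffice to decide $\simeq$ for each type. The associated GPT $\widetilde{\mathsf{Op}}$ has the same systems and as processes the equivalence classes $\widetilde T$ under $\simeq$, composed via representatives; closed diagrams are identified with their probabilities; classes are identified with vectors of probabilities on a finite tomographically complete set of testers, giving meaning to linear combinations, and mixtures give convex combinations $\widetilde T_1=\omega\widetilde T_2+(1-\omega)\widetilde T_3$. The class of deterministic effects on $A$ is $u_A$. $\mathbf{QuasiSubStoch}$ has systems $\mathbb{R}^\Lambda$ for finite sets $\Lambda$ (with $\mathbb{R}^\Lambda\otimes\mathbb{R}^{\Lambda'}=\mathbb{R}^{\Lambda\times\Lambda'}$, trivial system $\mathbb{R}$) and processes given by real matrices $f(\lambda'|\lambda)$ (linear maps), composed by composition and tensor product; $\mathbf{SubStoch}$ is its subtheory of substochastic maps ($f(\lambda'|\lambda)\in[0,1]$, $\sum_{\lambda'}f(\lambda'|\lambda)\le1$). $\mathbf{1}_\Lambda$ is the all-ones covector. A diagram-preserving map into $\mathbf{QuasiSubStoch}$ (resp. $\mathbf{SubStoch}$) sends each system $A$ to some $\mathbb{R}^{\Lambda_A}$, composites to tensor products, $I$ to $\mathbb{R}$, processes to processes of matching type, preserving $\circ$, $\otimes$ and identities. An ontological model of $\mathsf{Op}$ is a diagram-preserving $\xi:\mathsf{Op}\to\mathbf{SubStoch}$ mapping every deterministic effect on $A$ to $\mathbf{1}_{\Lambda_A}$, reproducing $p$ on closed diagrams, and preserving mixtures and coarse-grainings; it is noncontextual if $T\simeq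 T'\Rightarrow\xi(T)=\xi(T')$. An ontological model (resp. quasiprobabilistic model) of $\widetilde{\mathsf{Op}}$ is a diagram-preserving map $\widetilde{\mathsf{Op}}\to\mathbf{SubStoch}$ (resp. $\to\mathbf{QuasiSubStoch}$) mapping $u_A$ to $\mathbf{1}_{\Lambda_A}$, mapping each closed diagram to its probability, and preserving convex combinations and coarse-graining relations. A quasiprobabilistic model is positive if all matrix entries of all maps in its image are nonnegative, i.e. its image lies in $\mathbf{SubStoch}$. *)

theory Defs
  imports Complex_Main
begin

text \<open>A system R^Lambda with |Lambda| = n is represented by its index set {0..<n}.
  A linear map R^{Lambda} -> R^{Lambda'} (n = |Lambda|, m = |Lambda'|) is a matrix
  M with M i j = f(i | j), required to vanish outside the index range.
  The composite R^{n} (x) R^{n'} is R^{n*n'} with index (a,b) encoded as a*n'+b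
  (Kronecker ordering), so that tensoring is strictly associative.\<close>

type_synonym mat = "nat \<Rightarrow> nat \<Rightarrow> real"

definition wf_mat :: "nat \<Rightarrow> nat \<Rightarrow> mat \<Rightarrow> bool" where
  "wf_mat n m M \<longleftrightarrow> (\<forall>i j. (m \<le> i \<or> n \<le> j) \<longrightarrow> M i j = 0)"

definition mcomp :: "nat \<Rightarrow> mat \<Rightarrow> mat \<Rightarrow> mat" where
  "mcomp k M N = (\<lambda>i j. \<Sum>l<k. M i l * N l j)"

definition mtens :: "nat \<Rightarrow> nat \<Rightarrow> mat \<Rightarrow> mat \<Rightarrow> mat" where
  "mtens m2 n2 M N = (\<lambda>i j. M (i div m2) (j div n2) * N (i mod m2) (j mod n2))"

definition mid :: "nat \<Rightarrow> mat" where
  "mid n = (\<lambda>i j. if i = j \<and> i < n then 1 else 0)"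

definition ones :: "nat \<Rightarrow> mat" where
  "ones n = (\<lambda>i j. if i = 0 \<and> j < n then 1 else 0)"

definition mconv :: "real \<Rightarrow> mat \<Rightarrow> mat \<Rightarrow> mat" where
  "mconv w M N = (\<lambda>i j. w * M i j + (1 - w) * N i j)"

definition madd :: "mat \<Rightarrow> mat \<Rightarrow> mat" where
  "madd M N = (\<lambda>i j. M i j + N i j)"

definition substoch :: "nat \<Rightarrow> nat \<Rightarrow> mat \<Rightarrow> bool" where
  "substoch n m M \<longleftrightarrow> (\<forall>i j. 0 \<le> M i j \<and> M i j \<le> 1) \<and> (\<forall>j<n. (\<Sum>i<m. M i j) \<le> 1)"

definition nonneg_mat :: "mat \<Rightarrow> bool" where
  "nonneg_mat M \<longleftrightarrow> (\<forall>i j. 0 \<le> M i j)"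

record ('s, 'p) optheory =
  tens :: "'s \<Rightarrow> 's \<Rightarrow> 's"
  unitS :: 's
  procs :: "'p set"
  pdom :: "'p \<Rightarrow> 's"
  pcod :: "'p \<Rightarrow> 's"
  seq :: "'p \<Rightarrow> 'p \<Rightarrow> 'p"   \<comment> \<open>seq T S = T \<circ> S\<close>
  par :: "'p \<Rightarrow> 'p \<Rightarrow> 'p"
  idp :: "'s \<Rightarrow> 'p"
  prob :: "'p \<Rightarrow> real"
  det_eff :: "'p set"
  mixt :: "'p \<Rightarrow> real \<Rightarrow> 'p \<Rightarrow> 'p \<Rightarrow> bool" \<comment> \<open>T1 is the w-mixture of T2, T3\<close>
  cgr :: "'p \<Rightarrow> 'p \<Rightarrow> 'p \<Rightarrow> bool"  \<comment> \<open>T is the coarse-graining of T2, T3\<close>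

definition has_type :: "('s,'p) optheory \<Rightarrow> 'p \<Rightarrow> 's \<Rightarrow> 's \<Rightarrow> bool" where
  "has_type Op T A B \<longleftrightarrow> T \<in> procs Op \<and> pdom Op T = A \<and> pcod Op T = B"

definition closed_diag :: "('s,'p) optheory \<Rightarrow> 'p \<Rightarrow> bool" where
  "closed_diag Op D \<longleftrightarrow> has_type Op D (unitS Op) (unitS Op)"

definition is_tester :: "('s,'p) optheory \<Rightarrow> 's \<Rightarrow> 's \<Rightarrow> 'p \<times> 'p \<times> 's \<Rightarrow> bool" where
  "is_tester Op A B \<tau> \<longleftrightarrow> (case \<tau> of (s, e, W) \<Rightarrow>
     has_type Op s (unitS Op) (tens Op A W) \<and> has_type Op e (tens Op B W) (unitS Op))"

definition apply_tester :: "('s,'p) optheory \<Rightarrow> 'p \<times> 'p \<times> 's \<Rightarrow> 'p \<Rightarrow> 'p" where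
  "apply_tester Op \<tau> T = (case \<tau> of (s, e, W) \<Rightarrow>
     seq Op e (seq Op (par Op T (idp Op W)) s))"

definition opeq :: "('s,'p) optheory \<Rightarrow> 'p \<Rightarrow> 'p \<Rightarrow> bool" where
  "opeq Op T T' \<longleftrightarrow> T \<in> procs Op \<and> T' \<in> procs Op \<and>
     pdom Op T = pdom Op T' \<and> pcod Op T = pcod Op T' \<and>
     (\<forall>\<tau>. is_tester Op (pdom Op T) (pcod Op T) \<tau> \<longrightarrow>
        prob Op (apply_tester Op \<tau> T) = prob Op (apply_tester Op \<tau> T'))"

definition process_theory :: "('s,'p) optheory \<Rightarrow> bool" where
  "process_theory Op \<longleftrightarrow>
    (\<forall>T S. T \<in> procs Op \<and> S \<in> procs Op \<and> pdom Op T = pcod Op S \<longrightarrow>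
        has_type Op (seq Op T S) (pdom Op S) (pcod Op T)) \<and>
    (\<forall>T S. T \<in> procs Op \<and> S \<in> procs Op \<longrightarrow>
        has_type Op (par Op T S) (tens Op (pdom Op T) (pdom Op S)) (tens Op (pcod Op T) (pcod Op S))) \<and>
    (\<forall>A. has_type Op (idp Op A) A A)"

definition op_theory :: "('s,'p) optheory \<Rightarrow> bool" where
  "op_theory Op \<longleftrightarrow> process_theory Op \<and>
    \<comment> \<open>probability rule\<close>
    (\<forall>D. closed_diag Op D \<longrightarrow> 0 \<le> prob Op D \<and> prob Op D \<le> 1) \<and>
    (\<forall>D1 D2. closed_diag Op D1 \<and> closed_diag Op D2 \<longrightarrow>
        prob Op (par Op D1 D2) = prob Op D1 * prob Op D2) \<and>
    \<comment> \<open>mixtures: well-behaved and existing for all weights\<close>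
    (\<forall>T1 w T2 T3. mixt Op T1 w T2 T3 \<longrightarrow> 0 \<le> w \<and> w \<le> 1 \<and>
        has_type Op T2 (pdom Op T1) (pcod Op T1) \<and> has_type Op T3 (pdom Op T1) (pcod Op T1) \<and>
        T1 \<in> procs Op \<and>
        (\<forall>\<tau>. is_tester Op (pdom Op T1) (pcod Op T1) \<tau> \<longrightarrow>
           prob Op (apply_tester Op \<tau> T1) =
             w * prob Op (apply_tester Op \<tau> T2) + (1 - w) * prob Op (apply_tester Op \<tau> T3))) \<and>
    (\<forall>w T2 T3 A B. 0 \<le> w \<and> w \<le> 1 \<and> has_type Op T2 A B \<and> has_type Op T3 A B \<longrightarrow>
        (\<exists>T1. has_type Op T1 A B \<and> mixt Op T1 w T2 T3)) \<and>
    \<comment> \<open>coarse-grainings of effects add probabilities\<close>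
    (\<forall>T T2 T3. cgr Op T T2 T3 \<longrightarrow>
        has_type Op T (pdom Op T) (unitS Op) \<and>
        has_type Op T2 (pdom Op T) (unitS Op) \<and> has_type Op T3 (pdom Op T) (unitS Op) \<and>
        (\<forall>\<tau>. is_tester Op (pdom Op T) (unitS Op) \<tau> \<longrightarrow>
           prob Op (apply_tester Op \<tau> T) =
             prob Op (apply_tester Op \<tau> T2) + prob Op (apply_tester Op \<tau> T3))) \<and>
    \<comment> \<open>deterministic effects are effects, and all of them on a system are equivalent\<close>
    (\<forall>d\<in>det_eff Op. has_type Op d (pdom Op d) (unitS Op)) \<and>
    (\<forall>d\<in>det_eff Op. \<forall>d'\<in>det_eff Op. pdom Op d = pdom Op d' \<longrightarrow> opeq Op d d') \<and>
    \<comment> \<open>finite tomography\<close>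
    (\<forall>A B. \<exists>F. finite F \<and> (\<forall>\<tau>\<in>F. is_tester Op A B \<tau>) \<and>
        (\<forall>T T'. has_type Op T A B \<and> has_type Op T' A B \<and>
           (\<forall>\<tau>\<in>F. prob Op (apply_tester Op \<tau> T) = prob Op (apply_tester Op \<tau> T')) \<longrightarrow>
           opeq Op T T'))"

definition ontological_model :: "('s,'p) optheory \<Rightarrow> ('s \<Rightarrow> nat) \<Rightarrow> ('p \<Rightarrow> mat) \<Rightarrow> bool" where
  "ontological_model Op dm \<xi> \<longleftrightarrow>
    \<comment> \<open>diagram preservation\<close>
    (\<forall>A B. dm (tens Op A B) = dm A * dm B) \<and> dm (unitS Op) = 1 \<and>
    (\<forall>T\<in>procs Op. wf_mat (dm (pdom Op T)) (dm (pcod Op T)) (\<xi> T)) \<and>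
    (\<forall>T S. T \<in> procs Op \<and> S \<in> procs Op \<and> pdom Op T = pcod Op S \<longrightarrow>
        \<xi> (seq Op T S) = mcomp (dm (pcod Op S)) (\<xi> T) (\<xi> S)) \<and>
    (\<forall>T S. T \<in> procs Op \<and> S \<in> procs Op \<longrightarrow>
        \<xi> (par Op T S) = mtens (dm (pcod Op S)) (dm (pdom Op S)) (\<xi> T) (\<xi> S)) \<and>
    (\<forall>A. \<xi> (idp Op A) = mid (dm A)) \<and>
    \<comment> \<open>image in SubStoch\<close>
    (\<forall>T\<in>procs Op. substoch (dm (pdom Op T)) (dm (pcod Op T)) (\<xi> T)) \<and>
    \<comment> \<open>deterministic effects go to the all-ones covector\<close>
    (\<forall>d\<in>det_eff Op. \<xi> d = ones (dm (pdom Op d))) \<and>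
    \<comment> \<open>probabilities reproduced\<close>
    (\<forall>D. closed_diag Op D \<longrightarrow> \<xi> D 0 0 = prob Op D) \<and>
    \<comment> \<open>mixtures and coarse-grainings preserved\<close>
    (\<forall>T1 w T2 T3. mixt Op T1 w T2 T3 \<longrightarrow> \<xi> T1 = mconv w (\<xi> T2) (\<xi> T3)) \<and>
    (\<forall>T T2 T3. cgr Op T T2 T3 \<longrightarrow> \<xi> T = madd (\<xi> T2) (\<xi> T3))"

definition noncontextual_ontological_model ::
    "('s,'p) optheory \<Rightarrow> ('s \<Rightarrow> nat) \<Rightarrow> ('p \<Rightarrow> mat) \<Rightarrow> bool" where
  "noncontextual_ontological_model Op dm \<xi> \<longleftrightarrow>
    ontological_model Op dm \<xi> \<and> (\<forall>T T'. opeq Op T T' \<longrightarrow> \<xi> T = \<xi> T')"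

text \<open>Processes of the GPT are the equivalence classes of processes of Op.\<close>

definition cls :: "('s,'p) optheory \<Rightarrow> 'p \<Rightarrow> 'p set" where
  "cls Op T = {T'. opeq Op T T'}"

text \<open>Composition in the GPT is via representatives.\<close>

definition gpt_quasi_model :: "('s,'p) optheory \<Rightarrow> ('s \<Rightarrow> nat) \<Rightarrow> ('p set \<Rightarrow> mat) \<Rightarrow> bool" where
  "gpt_quasi_model Op dm \<xi> \<longleftrightarrow>
    (\<forall>A B. dm (tens Op A B) = dm A * dm B) \<and> dm (unitS Op) = 1 \<and>
    (\<forall>T\<in>procs Op. wf_mat (dm (pdom Op T)) (dm (pcod Op T)) (\<xi> (cls Op T))) \<and>
    (\<forall>T S. T \<in> procs Op \<and> S \<in> procs Op \<and> pdom Op T = pcod Op S \<longrightarrow>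
        \<xi> (cls Op (seq Op T S)) = mcomp (dm (pcod Op S)) (\<xi> (cls Op T)) (\<xi> (cls Op S))) \<and>
    (\<forall>T S. T \<in> procs Op \<and> S \<in> procs Op \<longrightarrow>
        \<xi> (cls Op (par Op T S)) = mtens (dm (pcod Op S)) (dm (pdom Op S)) (\<xi> (cls Op T)) (\<xi> (cls Op S))) \<and>
    (\<forall>A. \<xi> (cls Op (idp Op A)) = mid (dm A)) \<and>
    (\<forall>d\<in>det_eff Op. \<xi> (cls Op d) = ones (dm (pdom Op d))) \<and>
    (\<forall>D. closed_diag Op D \<longrightarrow> \<xi> (cls Op D) 0 0 = prob Op D) \<and>
    \<comment> \<open>convex combinations of classes (as vectors of tester probabilities)\<close>
    (\<forall>T1 w T2 T3. 0 \<le> w \<and> w \<le> 1 \<and> T1 \<in> procs Op \<and>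
        has_type Op T2 (pdom Op T1) (pcod Op T1) \<and> has_type Op T3 (pdom Op T1) (pcod Op T1) \<and>
        (\<forall>\<tau>. is_tester Op (pdom Op T1) (pcod Op T1) \<tau> \<longrightarrow>
           prob Op (apply_tester Op \<tau> T1) =
             w * prob Op (apply_tester Op \<tau> T2) + (1 - w) * prob Op (apply_tester Op \<tau> T3)) \<longrightarrow>
        \<xi> (cls Op T1) = mconv w (\<xi> (cls Op T2)) (\<xi> (cls Op T3))) \<and>
    \<comment> \<open>coarse-graining relations\<close>
    (\<forall>T T2 T3. cgr Op T T2 T3 \<longrightarrow> \<xi> (cls Op T) = madd (\<xi> (cls Op T2)) (\<xi> (cls Op T3)))"

definition gpt_ontological_model :: "('s,'p) optheory \<Rightarrow> ('s \<Rightarrow> nat) \<Rightarrow> ('p set \<Rightarrow> mat) \<Rightarrow> bool" where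
  "gpt_ontological_model Op dm \<xi> \<longleftrightarrow> gpt_quasi_model Op dm \<xi> \<and>
    (\<forall>T\<in>procs Op. substoch (dm (pdom Op T)) (dm (pcod Op T)) (\<xi> (cls Op T)))"

definition gpt_positive_quasi_model :: "('s,'p) optheory \<Rightarrow> ('s \<Rightarrow> nat) \<Rightarrow> ('p set \<Rightarrow> mat) \<Rightarrow> bool" where
  "gpt_positive_quasi_model Op dm \<xi> \<longleftrightarrow> gpt_quasi_model Op dm \<xi> \<and>
    (\<forall>T\<in>procs Op. nonneg_mat (\<xi> (cls Op T)) \<and>
       substoch (dm (pdom Op T)) (dm (pcod Op T)) (\<xi> (cls Op T)))"

end

theory Submission
  imports Defs
begin

text \<open>A noncontextual ontological model is constant on equivalence classes, so it factors
  through the quotient and defines a model of the GPT; conversely a model of the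
  GPT precomposed with the quotient map is a noncontextual model of the operational theory.
  The only non-bookkeeping point is convexity: a class that is a convex combination of two
  classes contains an actual mixture of representatives, on which the noncontextual model is
  convex-linear. Positivity of a quasiprobabilistic model is implied by substochasticity, so
  positive quasiprobabilistic models of the GPT are exactly its ontological models.\<close>

lemma opeq_sym: "opeq Op T T' \<Longrightarrow> opeq Op T' T"
  unfolding opeq_def by auto

lemma opeq_trans: "opeq Op T T' \<Longrightarrow> opeq Op T' T'' \<Longrightarrow> opeq Op T T''"
  unfolding opeq_def by auto

lemma opeq_refl: "T \<in> procs Op \<Longrightarrow> opeq Op T T"
  unfolding opeq_def by auto

lemma cls_eq_if_opeq: "opeq Op T T' \<Longrightarrow> cls Op T = cls Op T'"
  unfolding cls_def by (blast intro: opeq_trans opeq_sym)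

lemma opeq_some_cls: "T \<in> procs Op \<Longrightarrow> opeq Op T (SOME T'. T' \<in> cls Op T)"
  unfolding cls_def mem_Collect_eq by (rule someI) (rule opeq_refl)

lemma
  assumes "op_theory Op"
  shows seq_in_procs:
      "\<lbrakk>T \<in> procs Op; S \<in> procs Op; pdom Op T = pcod Op S\<rbrakk> \<Longrightarrow> seq Op T S \<in> procs Op"
    and par_in_procs: "\<lbrakk>T \<in> procs Op; S \<in> procs Op\<rbrakk> \<Longrightarrow> par Op T S \<in> procs Op"
    and idp_in_procs: "idp Op A \<in> procs Op"
    and det_eff_in_procs: "d \<in> det_eff Op \<Longrightarrow> d \<in> procs Op"
    and cgr_in_procs: "cgr Op T T2 T3 \<Longrightarrow> T \<in> procs Op \<and> T2 \<in> procs Op \<and> T3 \<in> procs Op"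
  using assms unfolding op_theory_def process_theory_def has_type_def by simp_all

text \<open>The relation \<open>cls T1 = w cls T2 + (1 - w) cls T3\<close> between processes of the GPT, classes
  being identified with their vectors of tester probabilities.\<close>

definition gpt_convex_comb :: "('s,'p) optheory \<Rightarrow> 'p \<Rightarrow> real \<Rightarrow> 'p \<Rightarrow> 'p \<Rightarrow> bool" where
  "gpt_convex_comb Op T1 w T2 T3 \<longleftrightarrow> 0 \<le> w \<and> w \<le> 1 \<and> T1 \<in> procs Op \<and>
     has_type Op T2 (pdom Op T1) (pcod Op T1) \<and> has_type Op T3 (pdom Op T1) (pcod Op T1) \<and>
     (\<forall>\<tau>. is_tester Op (pdom Op T1) (pcod Op T1) \<tau> \<longrightarrow>
        prob Op (apply_tester Op \<tau> T1) =
          w * prob Op (apply_tester Op \<tau> T2) + (1 - w) * prob Op (apply_tester Op \<tau> T3))"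

lemma gpt_convex_comb_if_mixt:
  assumes "op_theory Op" "mixt Op T1 w T2 T3"
  shows "gpt_convex_comb Op T1 w T2 T3"
  using assms unfolding op_theory_def gpt_convex_comb_def by (elim conjE) metis

lemma gpt_convex_comb_obtains_mixt:
  assumes op: "op_theory Op" and comb: "gpt_convex_comb Op T1 w T2 T3"
  obtains T1' where "mixt Op T1' w T2 T3" "opeq Op T1 T1'"
proof -
  obtain T1' where T1': "has_type Op T1' (pdom Op T1) (pcod Op T1)" "mixt Op T1' w T2 T3"
    using op comb unfolding op_theory_def gpt_convex_comb_def by (elim conjE) metis
  have "gpt_convex_comb Op T1' w T2 T3"
    using gpt_convex_comb_if_mixt[OF op T1'(2)] .
  with comb T1'(1) have "opeq Op T1 T1'"
    unfolding gpt_convex_comb_def opeq_def has_type_def by auto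
  with T1'(2) show thesis by (rule that)
qed

lemma noncontextual_model_convex:
  assumes op: "op_theory Op" and nc: "noncontextual_ontological_model Op dm \<xi>"
    and comb: "gpt_convex_comb Op T1 w T2 T3"
  shows "\<xi> T1 = mconv w (\<xi> T2) (\<xi> T3)"
proof -
  obtain T1' where "mixt Op T1' w T2 T3" "opeq Op T1 T1'"
    using gpt_convex_comb_obtains_mixt[OF op comb] .
  with nc show ?thesis
    unfolding noncontextual_ontological_model_def ontological_model_def by metis
qed

lemma gpt_ontological_model_if_noncontextual:
  assumes op: "op_theory Op" and nc: "noncontextual_ontological_model Op dm \<xi>'"
    and agree: "\<And>T. T \<in> procs Op \<Longrightarrow> \<xi> (cls Op T) = \<xi>' T"
  shows "gpt_ontological_model Op dm \<xi>"
proof -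
  have convex: "\<xi> (cls Op T1) = mconv w (\<xi> (cls Op T2)) (\<xi> (cls Op T3))"
    if "gpt_convex_comb Op T1 w T2 T3" for T1 w T2 T3
    using noncontextual_model_convex[OF op nc that] that agree
    unfolding gpt_convex_comb_def has_type_def by simp
  have "ontological_model Op dm \<xi>'"
    using nc unfolding noncontextual_ontological_model_def by blast
  with convex show ?thesis
    unfolding gpt_ontological_model_def gpt_quasi_model_def gpt_convex_comb_def[symmetric]
      ontological_model_def closed_diag_def
    by (simp add: agree op has_type_def seq_in_procs par_in_procs idp_in_procs det_eff_in_procs
        cgr_in_procs)
qed

lemma gpt_quasi_model_convex:
  assumes "gpt_quasi_model Op dm \<xi>" "gpt_convex_comb Op T1 w T2 T3"
  shows "\<xi> (cls Op T1) = mconv w (\<xi> (cls Op T2)) (\<xi> (cls Op T3))"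
  using assms unfolding gpt_quasi_model_def gpt_convex_comb_def by (elim conjE) blast

lemma noncontextual_model_if_gpt_ontological:
  assumes op: "op_theory Op" and gpt: "gpt_ontological_model Op dm \<xi>"
  shows "noncontextual_ontological_model Op dm (\<lambda>T. \<xi> (cls Op T))"
proof -
  have quasi: "gpt_quasi_model Op dm \<xi>"
    using gpt unfolding gpt_ontological_model_def by blast
  have "\<forall>T1 w T2 T3. mixt Op T1 w T2 T3 \<longrightarrow>
          \<xi> (cls Op T1) = mconv w (\<xi> (cls Op T2)) (\<xi> (cls Op T3))"
    using gpt_quasi_model_convex[OF quasi] gpt_convex_comb_if_mixt[OF op] by blast
  moreover have "\<forall>T T'. opeq Op T T' \<longrightarrow> \<xi> (cls Op T) = \<xi> (cls Op T')"
    using cls_eq_if_opeq by metis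
  ultimately show ?thesis
    using gpt unfolding noncontextual_ontological_model_def ontological_model_def
      gpt_ontological_model_def gpt_quasi_model_def
    by simp
qed

lemma gpt_positive_quasi_model_iff_ontological:
  "gpt_positive_quasi_model Op dm \<xi> \<longleftrightarrow> gpt_ontological_model Op dm \<xi>"
  unfolding gpt_positive_quasi_model_def gpt_ontological_model_def substoch_def nonneg_mat_def
  by blast

theorem corollary2:
  fixes Op :: "('s, 'p) optheory"
  assumes "op_theory Op"
  shows "((\<exists>dm \<xi>. noncontextual_ontological_model Op dm \<xi>) \<longleftrightarrow>
            (\<exists>dm \<xi>. gpt_ontological_model Op dm \<xi>)) \<and>
         ((\<exists>dm \<xi>. gpt_ontological_model Op dm \<xi>) \<longleftrightarrow>
            (\<exists>dm \<xi>. gpt_positive_quasi_model Op dm \<xi>))"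
proof -
  have "(\<exists>dm \<xi>. noncontextual_ontological_model Op dm \<xi>) \<longleftrightarrow>
        (\<exists>dm \<xi>. gpt_ontological_model Op dm \<xi>)"
  proof
    assume "\<exists>dm \<xi>. noncontextual_ontological_model Op dm \<xi>"
    then obtain dm \<xi> where nc: "noncontextual_ontological_model Op dm \<xi>" by blast
    have "\<xi> (SOME T'. T' \<in> cls Op T) = \<xi> T" if "T \<in> procs Op" for T
      using nc opeq_some_cls[OF that] unfolding noncontextual_ontological_model_def by metis
    with nc have "gpt_ontological_model Op dm (\<lambda>X. \<xi> (SOME T. T \<in> X))"
      by (intro gpt_ontological_model_if_noncontextual[OF assms])
    then show "\<exists>dm \<xi>. gpt_ontological_model Op dm \<xi>" by blast
  next
    assume "\<exists>dm \<xi>. gpt_ontological_model Op dm \<xi>"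
    then show "\<exists>dm \<xi>. noncontextual_ontological_model Op dm \<xi>"
      by (blast intro: noncontextual_model_if_gpt_ontological[OF assms])
  qed
  then show ?thesis
    using gpt_positive_quasi_model_iff_ontological by blast
qed

end
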